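(* For every $C>1$ there are $\varepsilon>0$ and $n_C\in\mathbb N$ such that the following holds. If $G=(V_1,V_2,E)$ is a $C$-bipartite-Ramsey graph with $|V_1|\ge|V_2|/2\ge n_C$, then either $V_1$ contains an $\varepsilon$-pair-star of size $|V_1|^{0.5}$, or $V_1$ contains an $\varepsilon$-pair-matching of size $|V_1|^{0.5}$.
   Context: A bipartite graph $G=(V_1,V_2,E)$ has vertex set $V_1\sqcup V_2$ and edge set $E\subset V_1\times V_2$; $N(v)$ is the neighbourhood and $d(v)$ the degree of $v$. Given $C>0$, $G$ is $C$-bipartite-Ramsey if for all integers $t_1\ge C\log_2|V_1|$, $t_2\ge C\log_2|V_2|$ there are no $T_1\subset V_1$, $T_2\subset V_2$ with $|T_1|=t_1$, $|T_2|=t_2$ such that all pairs in $T_1\times T_2$ are edges, or all are non-edges. For $u,v\in V_1$, $\mathrm{div}(u,v)=N(u)\triangle N(v)$ and $\mathrm{divb}(u,v)$ is the larger of $N(u)\setminus N(v)$, $N(v)\setminus N(u)$ (either if equal). Ordered pairs $\mathbf p=(u,v)$ of distinct vertices are written so that $\mathrm{divb}(\mathbf p)=N(u)\setminus N(v)$, and $d_{\mathbf p}:=d(u)-d(v)$. An $\varepsilon$-pair-star of size $k$ (associated to $V_1$) rooted at $x_0$ is a set $\{x_0,x_1,\ldots,x_k\}\subset V_1$ with $|d(x_j)-d(x_0)|\le|V_2|^{0.5}$ for all $j\in[k]$ and $|\mathrm{div}(x_i,x_j)|\ge\varepsilon|V_2|$ for all $i\ne j$ in $\{0,\ldots,k\}$.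 An $\varepsilon$-pair-matching of size $k$ (associated to $V_1$) is a collection of pairwise vertex-disjoint ordered pairs $\mathbf p_i=(x_i,y_i)$, $i\in[k]$, of vertices of $V_1$ with $d_{\mathbf p_i}\le|V_2|^{0.5}$ for all $i$, and $|\mathrm{divb}(\mathbf p_i)\setminus N(x_j)|\ge\varepsilon|V_2|$ and $|\mathrm{divb}(\mathbf p_i)\setminus N(y_j)|\ge\varepsilon|V_2|$ for all $i\ne j$ in $[k]$. Floors/ceilings of non-integer sizes are ignored. *)

theory Defs
  imports "HOL-Analysis.Analysis"
begin

definition bipartite_graph :: "nat set \<Rightarrow> nat set \<Rightarrow> (nat \<times> nat) set \<Rightarrow> bool" where
  "bipartite_graph V1 V2 E \<longleftrightarrow> finite V1 \<and> finite V2 \<and> E \<subseteq> V1 \<times> V2"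

definition nbhd :: "nat set \<Rightarrow> (nat \<times> nat) set \<Rightarrow> nat \<Rightarrow> nat set" where
  "nbhd V2 E v = {w \<in> V2. (v, w) \<in> E}"

definition deg :: "nat set \<Rightarrow> (nat \<times> nat) set \<Rightarrow> nat \<Rightarrow> nat" where
  "deg V2 E v = card (nbhd V2 E v)"

definition bip_ramsey :: "real \<Rightarrow> nat set \<Rightarrow> nat set \<Rightarrow> (nat \<times> nat) set \<Rightarrow> bool" where
  "bip_ramsey C V1 V2 E \<longleftrightarrow>
     (\<forall>t1 t2 :: nat. real t1 \<ge> C * log 2 (real (card V1)) \<longrightarrow> real t2 \<ge> C * log 2 (real (card V2)) \<longrightarrow>
        \<not> (\<exists>T1 T2. T1 \<subseteq> V1 \<and> T2 \<subseteq> V2 \<and> card T1 = t1 \<and> card T2 = t2 \<and>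
               (T1 \<times> T2 \<subseteq> E \<or> (T1 \<times> T2) \<inter> E = {})))"

definition divset :: "nat set \<Rightarrow> (nat \<times> nat) set \<Rightarrow> nat \<Rightarrow> nat \<Rightarrow> nat set" where
  "divset V2 E u v = nbhd V2 E u - nbhd V2 E v \<union> (nbhd V2 E v - nbhd V2 E u)"

definition divb :: "nat set \<Rightarrow> (nat \<times> nat) set \<Rightarrow> nat \<Rightarrow> nat \<Rightarrow> nat set" where
  "divb V2 E u v = (if card (nbhd V2 E v - nbhd V2 E u) \<le> card (nbhd V2 E u - nbhd V2 E v)
                    then nbhd V2 E u - nbhd V2 E v else nbhd V2 E v - nbhd V2 E u)"

definition pair_star ::
  "real \<Rightarrow> nat set \<Rightarrow> nat set \<Rightarrow> (nat \<times> nat) set \<Rightarrow> nat \<Rightarrow> nat set \<Rightarrow> nat \<Rightarrow> bool" where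
  "pair_star eps V1 V2 E x0 X k \<longleftrightarrow>
     x0 \<in> V1 \<and> X \<subseteq> V1 \<and> x0 \<notin> X \<and> card X = k \<and>
     (\<forall>x \<in> X. \<bar>real (deg V2 E x) - real (deg V2 E x0)\<bar> \<le> real (card V2) powr 0.5) \<and>
     (\<forall>x \<in> insert x0 X. \<forall>y \<in> insert x0 X. x \<noteq> y \<longrightarrow>
        real (card (divset V2 E x y)) \<ge> eps * real (card V2))"

text \<open>An eps-pair-matching of size k: ordered pairs p i = (x_i, y_i), i < k, of distinct
  vertices of V1, pairwise vertex-disjoint, written so that divb(p_i) = N(x_i) - N(y_i).\<close>
definition pair_matching ::
  "real \<Rightarrow> nat set \<Rightarrow> nat set \<Rightarrow> (nat \<times> nat) set \<Rightarrow> (nat \<Rightarrow> nat \<times> nat) \<Rightarrow> nat \<Rightarrow> bool" where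
  "pair_matching eps V1 V2 E p k \<longleftrightarrow>
     (\<forall>i < k. fst (p i) \<in> V1 \<and> snd (p i) \<in> V1 \<and> fst (p i) \<noteq> snd (p i) \<and>
        divb V2 E (fst (p i)) (snd (p i)) = nbhd V2 E (fst (p i)) - nbhd V2 E (snd (p i)) \<and>
        real (deg V2 E (fst (p i))) - real (deg V2 E (snd (p i))) \<le> real (card V2) powr 0.5) \<and>
     (\<forall>i < k. \<forall>j < k. i \<noteq> j \<longrightarrow>
        {fst (p i), snd (p i)} \<inter> {fst (p j), snd (p j)} = {} \<and>
        real (card (divb V2 E (fst (p i)) (snd (p i)) - nbhd V2 E (fst (p j)))) \<ge> eps * real (card V2) \<and>
        real (card (divb V2 E (fst (p i)) (snd (p i)) - nbhd V2 E (snd (p j)))) \<ge> eps * real (card V2))"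

end

theory Submission
  imports Defs "HOL-Real_Asymp.Real_Asymp"
begin

text \<open>
  Fix \<delta> < 1/2 and let t_i = \<lceil>C log |V_i|\<rceil> be the Ramsey thresholds. If every vertex of
  S \<subseteq> V1 agrees with a fixed adjacency pattern on all but a \<delta>-fraction of a large D \<subseteq> V2,
  a greedy choice of t2 columns of D keeps (1 - 2\<delta>)^t2 |S| vertices of S homogeneous
  to all of them, so the Ramsey property gives |S| < L = t1 / (1 - 2\<delta>)^t2. For
  1 - 2\<delta> = 2^(-1/(8C)) this is L = O(n^(1/8) log n). The bound applies to clusters of
  pairwise close vertices, and, for a pair (x, y) with large div, to the vertices whose
  neighbourhood covers most of divb(x, y).

  Take a maximum vertex-disjoint family F of good pairs (degrees differing by at most
  \<surd>|V2|, large div). If |F| \<ge> (4L + 1)\<surd>n, a greedy subfamily in which no pair meets the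
  bad set of another is an \<epsilon>-pair-matching of size \<surd>n. Otherwise, by maximality, uncovered
  vertices with close degrees are close, so splitting them into O(\<surd>n) degree classes shows
  that there are only O(\<surd>n L) of them, too few to cover V1 together with F. So the
  pair-matching alternative always holds.
\<close>

lemma exists_le_average:
  fixes f :: "'a \<Rightarrow> real" and c :: real
  assumes "finite A" "A \<noteq> {}" "(\<Sum>a\<in>A. f a) \<le> card A * c"
  shows "\<exists>a\<in>A. f a \<le> c"
proof (rule ccontr)
  assume "\<not> ?thesis"
  then have "(\<Sum>a\<in>A. c) < (\<Sum>a\<in>A. f a)"
    using assms(1,2) by (intro sum_strict_mono) auto
  with assms(3) show False by simp
qed

lemma sum_card_filter_swap:
  "finite A \<Longrightarrow> finite B \<Longrightarrow>
     (\<Sum>a\<in>A. real (card {b\<in>B. P a b})) = (\<Sum>b\<in>B. real (card {a\<in>A. P a b}))"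
  unfolding of_nat_sum[symmetric] by (rule arg_cong[of _ _ real], rule sum_multicount_gen) auto

lemma dense_relation_common_subset:
  fixes Q :: "'a \<Rightarrow> 'b \<Rightarrow> bool" and \<delta> :: real
  assumes fin: "finite S" "finite D" and \<delta>: "0 \<le> \<delta>" "\<delta> \<le> 1/2"
    and sparse: "\<And>v. v \<in> S \<Longrightarrow> card {w\<in>D. \<not> Q v w} \<le> \<delta> * card D"
  shows "2 * j \<le> card D \<Longrightarrow>
    \<exists>T\<subseteq>D. card T = j \<and> (1 - 2*\<delta>)^j * card S \<le> card {v\<in>S. \<forall>w\<in>T. Q v w}"
proof (induction j)
  case 0
  show ?case by (intro exI[of _ "{}"]) simp
next
  case (Suc j)
  then obtain T where T: "T \<subseteq> D" "card T = j"
    and T_large: "(1 - 2*\<delta>)^j * card S \<le> card {v\<in>S. \<forall>w\<in>T. Q v w}" by auto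
  define S' where "S' = {v\<in>S. \<forall>w\<in>T. Q v w}"
  define D' where "D' = D - T"
  have fin': "finite S'" "finite D'" using fin by (auto simp: S'_def D'_def)
  have "card D' = card D - j"
    using card_Diff_subset[OF finite_subset[OF T(1) fin(2)] T(1)] T(2) by (simp add: D'_def)
  then have D'_half: "card D \<le> 2 * card D'" and "D' \<noteq> {}" using Suc.prems by auto
  have "(\<Sum>w\<in>D'. real (card {v\<in>S'. \<not> Q v w})) = (\<Sum>v\<in>S'. real (card {w\<in>D'. \<not> Q v w}))"
    by (rule sum_card_filter_swap[OF fin'(2,1)])
  also have "\<dots> \<le> (\<Sum>v\<in>S'. \<delta> * card D)"
  proof (rule sum_mono)
    fix v assume "v \<in> S'"
    have "card {w\<in>D'. \<not> Q v w} \<le> card {w\<in>D. \<not> Q v w}"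
      using fin by (intro card_mono) (auto simp: D'_def)
    then show "real (card {w\<in>D'. \<not> Q v w}) \<le> \<delta> * card D"
      using sparse \<open>v \<in> S'\<close> unfolding S'_def by force
  qed
  also have "\<dots> \<le> card D' * (2 * \<delta> * card S')"
    using D'_half \<delta> by (simp add: mult_left_mono mult.commute mult.left_commute)
  finally obtain w where w: "w \<in> D'" "card {v\<in>S'. \<not> Q v w} \<le> 2 * \<delta> * card S'"
    using exists_le_average[OF fin'(2) \<open>D' \<noteq> {}\<close>] by blast
  have "{v\<in>S. \<forall>u\<in>insert w T. Q v u} = S' - {v\<in>S'. \<not> Q v w}"
    by (auto simp: S'_def)
  moreover have "real (card (S' - {v\<in>S'. \<not> Q v w})) = card S' - real (card {v\<in>S'. \<not> Q v w})"
    using fin' by (subst card_Diff_subset) (auto intro!: of_nat_diff card_mono)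
  ultimately have "(1 - 2*\<delta>) * card S' \<le> card {v\<in>S. \<forall>u\<in>insert w T. Q v u}"
    using w by (simp add: algebra_simps)
  moreover have "(1 - 2*\<delta>)^Suc j * card S \<le> (1 - 2*\<delta>) * card S'"
    using T_large \<delta> by (simp add: S'_def mult.assoc mult_left_mono)
  moreover have "w \<in> D" "w \<notin> T" "finite T"
    using w(1) finite_subset[OF T(1) fin(2)] by (auto simp: D'_def)
  then have "insert w T \<subseteq> D" "card (insert w T) = Suc j"
    using T by auto
  ultimately show ?case by (intro exI[of _ "insert w T"]) auto
qed

lemma large_independent_subset:
  fixes R :: "'a \<Rightarrow> 'a \<Rightarrow> bool" and L :: real
  assumes "finite P" and out_degree: "\<And>i. i \<in> P \<Longrightarrow> card {j\<in>P. R i j} \<le> L"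
  shows "\<exists>I\<subseteq>P. card P \<le> card I * (2*L + 1) \<and> (\<forall>i\<in>I. \<forall>j\<in>I. i \<noteq> j \<longrightarrow> \<not> R i j)"
  using assms
proof (induction "card P" arbitrary: P rule: less_induct)
  case less
  show ?case
  proof (cases "P = {}")
    case True
    then show ?thesis by auto
  next
    case False
    have "(\<Sum>i\<in>P. real (card {j\<in>P. R j i})) = (\<Sum>j\<in>P. real (card {i\<in>P. R j i}))"
      by (rule sum_card_filter_swap[OF less.prems(1) less.prems(1)])
    also have "\<dots> \<le> (\<Sum>j\<in>P. L)"
      using less.prems(2) by (intro sum_mono) auto
    also have "\<dots> = card P * L" by simp
    finally obtain i where i: "i \<in> P" "card {j\<in>P. R j i} \<le> L"
      using exists_le_average[OF less.prems(1) False] by blast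
    define N where "N = insert i ({j\<in>P. R i j} \<union> {j\<in>P. R j i})"
    define P' where "P' = P - N"
    have "N \<subseteq> P" using i by (auto simp: N_def)
    have "card N \<le> Suc (card ({j\<in>P. R i j} \<union> {j\<in>P. R j i}))"
      using less.prems(1) by (simp add: N_def card_insert_if)
    also have "\<dots> \<le> card {j\<in>P. R i j} + card {j\<in>P. R j i} + 1"
      using card_Un_le by simp
    finally have "card N \<le> card {j\<in>P. R i j} + card {j\<in>P. R j i} + 1" .
    then have "card N \<le> 2*L + 1" using less.prems(2)[OF i(1)] i(2) by linarith
    moreover have "card P' = card P - card N"
      using card_Diff_subset[OF finite_subset[OF \<open>N \<subseteq> P\<close> less.prems(1)] \<open>N \<subseteq> P\<close>]
      by (simp add: P'_def)
    moreover have "card N \<le> card P" using \<open>N \<subseteq> P\<close> less.prems(1) by (rule card_mono[rotated])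
    ultimately have card_P': "card P \<le> card P' + (2*L + 1)" by simp
    have P'_smaller: "card P' < card P" and "finite P'"
      using i less.prems(1) by (auto simp: P'_def N_def intro!: psubset_card_mono)
    have out_degree': "card {j\<in>P'. R k j} \<le> L" if "k \<in> P'" for k
    proof -
      have "card {j\<in>P'. R k j} \<le> card {j\<in>P. R k j}"
        using less.prems(1) by (intro card_mono) (auto simp: P'_def)
      then show ?thesis using less.prems(2) that by (force simp: P'_def)
    qed
    obtain I where I: "I \<subseteq> P'" "card P' \<le> card I * (2*L + 1)"
      "\<forall>a\<in>I. \<forall>b\<in>I. a \<noteq> b \<longrightarrow> \<not> R a b"
      using less.hyps[OF P'_smaller \<open>finite P'\<close> out_degree'] by blast
    have "i \<notin> I" "finite I"
      using I(1) finite_subset[OF I(1) \<open>finite P'\<close>] by (auto simp: P'_def N_def)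
    then have "card P \<le> card (insert i I) * (2*L + 1)"
      using I(2) card_P' by (simp add: algebra_simps)
    moreover have "\<forall>a\<in>insert i I. \<forall>b\<in>insert i I. a \<noteq> b \<longrightarrow> \<not> R a b"
      using I(1,3) by (auto simp: P'_def N_def)
    ultimately show ?thesis using I(1) i(1) by (intro exI[of _ "insert i I"]) (auto simp: P'_def)
  qed
qed

lemma div_eq_imp_less_add:
  fixes a b s :: nat
  assumes "a div s = b div s" "0 < s"
  shows "a < b + s"
proof -
  have "a = a div s * s + a mod s" by simp
  also have "\<dots> < b div s * s + s" using assms by simp
  also have "\<dots> \<le> b + s" by simp
  finally show ?thesis .
qed

lemma card_le_by_buckets:
  fixes f :: "'a \<Rightarrow> nat" and B :: real
  assumes "finite R" "0 < s" "\<And>v. v \<in> R \<Longrightarrow> f v \<le> M"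
    and bucket_le: "\<And>S. S \<subseteq> R \<Longrightarrow> (\<And>u v. u \<in> S \<Longrightarrow> v \<in> S \<Longrightarrow> f u < f v + s) \<Longrightarrow> card S \<le> B"
  shows "card R \<le> (real (M div s) + 1) * B"
proof -
  define bucket where "bucket b = {v\<in>R. f v div s = b}" for b
  have "R = (\<Union>b\<le>M div s. bucket b)"
    using assms(3) by (auto simp: bucket_def div_le_mono)
  then have "card R \<le> (\<Sum>b\<le>M div s. card (bucket b))"
    by (metis card_UN_le finite_atMost)
  then have "real (card R) \<le> (\<Sum>b\<le>M div s. real (card (bucket b)))"
    by (metis of_nat_le_iff of_nat_sum)
  also have "\<dots> \<le> (\<Sum>b\<le>M div s. B)"
  proof (intro sum_mono bucket_le)
    fix b u v assume "u \<in> bucket b" "v \<in> bucket b"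
    then show "f u < f v + s"
      using div_eq_imp_less_add \<open>0 < s\<close> by (simp add: bucket_def)
  qed (simp add: bucket_def)
  also have "\<dots> = (real (M div s) + 1) * B" by simp
  finally show ?thesis .
qed

lemma nbhd_subset: "nbhd V2 E v \<subseteq> V2"
  by (auto simp: nbhd_def)

lemma divb_subset: "divb V2 E u v \<subseteq> V2"
  using nbhd_subset by (auto simp: divb_def)

lemma divset_commute: "divset V2 E u v = divset V2 E v u"
  by (auto simp: divset_def)

lemma card_divset_le_double_divb:
  assumes "finite V2"
  shows "card (divset V2 E u v) \<le> 2 * card (divb V2 E u v)"
proof -
  have "card (divset V2 E u v)
      \<le> card (nbhd V2 E u - nbhd V2 E v) + card (nbhd V2 E v - nbhd V2 E u)"
    unfolding divset_def by (rule card_Un_le)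
  then show ?thesis by (auto simp: divb_def)
qed

lemma divb_eq_iff_card_le:
  "divb V2 E u v = nbhd V2 E u - nbhd V2 E v \<longleftrightarrow>
     card (nbhd V2 E v - nbhd V2 E u) \<le> card (nbhd V2 E u - nbhd V2 E v)"
  by (auto simp: divb_def)

definition ramsey_threshold :: "real \<Rightarrow> nat \<Rightarrow> nat" where
  "ramsey_threshold C N = nat \<lceil>C * log 2 N\<rceil>"

lemma ramsey_threshold_le:
  assumes "0 \<le> C" "1 \<le> N"
  shows "ramsey_threshold C N \<le> C * log 2 N + 1"
proof -
  have "0 \<le> C * log 2 N" using assms by simp
  then show ?thesis unfolding ramsey_threshold_def by linarith
qed

lemma bip_ramsey_few_uniform_vertices:
  fixes \<delta> :: real
  assumes graph: "bipartite_graph V1 V2 E" and ramsey: "bip_ramsey C V1 V2 E"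
    and "S \<subseteq> V1" "D \<subseteq> V2" and \<delta>: "0 \<le> \<delta>" "\<delta> < 1/2"
    and D_large: "2 * ramsey_threshold C (card V2) \<le> card D"
    and uniform: "\<And>v. v \<in> S \<Longrightarrow> card {w\<in>D. ((v, w) \<in> E) \<noteq> b} \<le> \<delta> * card D"
  shows "card S * (1 - 2*\<delta>) ^ ramsey_threshold C (card V2) < ramsey_threshold C (card V1)"
proof (rule ccontr)
  let ?t1 = "ramsey_threshold C (card V1)" and ?t2 = "ramsey_threshold C (card V2)"
  assume "\<not> ?thesis"
  then have S_large: "?t1 \<le> card S * (1 - 2*\<delta>) ^ ?t2" by simp
  have "finite S" "finite D"
    using graph finite_subset[OF \<open>S \<subseteq> V1\<close>] finite_subset[OF \<open>D \<subseteq> V2\<close>]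
    by (auto simp: bipartite_graph_def)
  then obtain T2 where T2: "T2 \<subseteq> D" "card T2 = ?t2"
    and "(1 - 2*\<delta>) ^ ?t2 * card S \<le> card {v\<in>S. \<forall>w\<in>T2. ((v, w) \<in> E) = b}"
    using dense_relation_common_subset[of S D \<delta> "\<lambda>v w. ((v, w) \<in> E) = b", OF _ _ _ _ uniform D_large]
      \<delta> by auto
  with S_large have "?t1 \<le> card {v\<in>S. \<forall>w\<in>T2. ((v, w) \<in> E) = b}"
    by (simp add: mult.commute)
  then obtain T1 where T1: "T1 \<subseteq> {v\<in>S. \<forall>w\<in>T2. ((v, w) \<in> E) = b}" "card T1 = ?t1"
    by (meson obtain_subset_with_card_n)
  then have "T1 \<times> T2 \<subseteq> E \<or> (T1 \<times> T2) \<inter> E = {}"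
    by (cases b) auto
  moreover have "C * log 2 (card V1) \<le> ?t1" "C * log 2 (card V2) \<le> ?t2"
    unfolding ramsey_threshold_def by linarith+
  moreover have "T1 \<subseteq> V1" "T2 \<subseteq> V2" using T1(1) T2(1) \<open>S \<subseteq> V1\<close> \<open>D \<subseteq> V2\<close> by auto
  ultimately show False
    using ramsey[unfolded bip_ramsey_def, rule_format, of ?t1 ?t2] T1(2) T2(2) by blast
qed

locale ramsey_graph =
  fixes C \<delta> :: real and V1 V2 :: "nat set" and E :: "(nat \<times> nat) set"
  assumes graph: "bipartite_graph V1 V2 E" and ramsey: "bip_ramsey C V1 V2 E"
    and \<delta>_pos: "0 < \<delta>" and \<delta>_less_half: "\<delta> < 1/2"
    and threshold_small: "2 * ramsey_threshold C (card V2) \<le> \<delta>/4 * card V2"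
begin

lemma finite_V1: "finite V1" and finite_V2: "finite V2"
  using graph by (auto simp: bipartite_graph_def)

definition uniform_bound :: real where
  "uniform_bound = ramsey_threshold C (card V1) / (1 - 2*\<delta>) ^ ramsey_threshold C (card V2)"

lemma uniform_bound_nonneg: "0 \<le> uniform_bound"
  using \<delta>_less_half by (simp add: uniform_bound_def)

lemma card_uniform_less:
  assumes "S \<subseteq> V1" "D \<subseteq> V2" "\<delta>/4 * card V2 \<le> card D"
    and "\<And>v. v \<in> S \<Longrightarrow> card {w\<in>D. ((v, w) \<in> E) \<noteq> b} \<le> \<delta> * card D"
  shows "card S < uniform_bound"
proof -
  have "2 * ramsey_threshold C (card V2) \<le> card D"
    using threshold_small assms(3) by linarith
  then have "card S * (1 - 2*\<delta>) ^ ramsey_threshold C (card V2) < ramsey_threshold C (card V1)"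
    using bip_ramsey_few_uniform_vertices[OF graph ramsey assms(1,2) _ \<delta>_less_half _ assms(4)]
      \<delta>_pos by simp
  then show ?thesis
    using \<delta>_less_half by (simp add: uniform_bound_def pos_less_divide_eq)
qed

lemma exists_majority_adjacency:
  "\<exists>b. card V2 \<le> 2 * card {w\<in>V2. ((x, w) \<in> E) = b}"
proof -
  have "card V2 = card {w\<in>V2. ((x, w) \<in> E) = True} + card {w\<in>V2. ((x, w) \<in> E) = False}"
    using finite_V2 by (subst card_Un_disjoint[symmetric]) (auto intro: arg_cong[of _ _ card])
  then have "card V2 \<le> 2 * card {w\<in>V2. ((x, w) \<in> E) = True} \<or>
      card V2 \<le> 2 * card {w\<in>V2. ((x, w) \<in> E) = False}"
    by linarith
  then show ?thesis by blast
qed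

lemma card_cluster_le:
  assumes "S \<subseteq> V1"
    and close: "\<And>x y. x \<in> S \<Longrightarrow> y \<in> S \<Longrightarrow> x \<noteq> y \<Longrightarrow> card (divset V2 E x y) < \<delta>/2 * card V2"
  shows "card S \<le> uniform_bound"
proof (cases "S = {}")
  case True
  then show ?thesis using uniform_bound_nonneg by simp
next
  case False
  then obtain x where "x \<in> S" by auto
  \<comment> \<open>Every y \<in> S agrees with x on the majority side D of x, except on div(x, y).\<close>
  obtain b where b: "card V2 \<le> 2 * card {w\<in>V2. ((x, w) \<in> E) = b}"
    using exists_majority_adjacency by blast
  define D where "D = {w\<in>V2. ((x, w) \<in> E) = b}"
  have D_half: "real (card V2) \<le> 2 * card D" using b by (simp add: D_def)
  have "card {w\<in>D. ((y, w) \<in> E) \<noteq> b} \<le> \<delta> * card D" if "y \<in> S" for y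
  proof -
    have "{w\<in>D. ((y, w) \<in> E) \<noteq> b} \<subseteq> divset V2 E x y"
      by (auto simp: D_def divset_def nbhd_def)
    then have "card {w\<in>D. ((y, w) \<in> E) \<noteq> b} \<le> card (divset V2 E x y)"
      using finite_V2 by (intro card_mono) (auto simp: divset_def nbhd_def)
    moreover have "card (divset V2 E x y) \<le> \<delta> * card D"
    proof (cases "y = x")
      case True
      then show ?thesis using \<delta>_pos by (simp add: divset_def)
    next
      case False
      then have "card (divset V2 E x y) < \<delta>/2 * card V2" using close \<open>x \<in> S\<close> that by simp
      also have "\<dots> \<le> \<delta> * card D" using D_half \<delta>_pos by simp
      finally show ?thesis by simp
    qed
    ultimately show ?thesis by linarith
  qed
  moreover have "\<delta>/4 * card V2 \<le> 1/8 * card V2"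
    using \<delta>_less_half by (intro mult_right_mono) auto
  then have "\<delta>/4 * card V2 \<le> card D" using D_half by linarith
  ultimately show ?thesis
    using card_uniform_less[OF assms(1), of D b] by (force simp: D_def)
qed

definition good_pair :: "nat \<times> nat \<Rightarrow> bool" where
  "good_pair p \<longleftrightarrow> fst p \<in> V1 \<and> snd p \<in> V1 \<and> fst p \<noteq> snd p \<and>
     divb V2 E (fst p) (snd p) = nbhd V2 E (fst p) - nbhd V2 E (snd p) \<and>
     real (deg V2 E (fst p)) - real (deg V2 E (snd p)) \<le> sqrt (card V2) \<and>
     \<delta>/2 * card V2 \<le> card (divset V2 E (fst p) (snd p))"

text \<open>A pair of an \<epsilon>-pair-matching has no vertex in the bad set of another pair.\<close>

definition bad_set :: "nat \<times> nat \<Rightarrow> nat set" where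
  "bad_set p = {v\<in>V1. card (divb V2 E (fst p) (snd p) - nbhd V2 E v) < \<delta>^2/4 * card V2}"

lemma card_bad_set_le:
  assumes "good_pair p"
  shows "card (bad_set p) \<le> uniform_bound"
proof -
  define D where "D = divb V2 E (fst p) (snd p)"
  have "card (divset V2 E (fst p) (snd p)) \<le> 2 * card D"
    unfolding D_def using finite_V2 by (rule card_divset_le_double_divb)
  then have D_large: "\<delta>/4 * card V2 \<le> card D"
    using assms unfolding good_pair_def by linarith
  have "card {w\<in>D. ((v, w) \<in> E) \<noteq> True} \<le> \<delta> * card D" if "v \<in> bad_set p" for v
  proof -
    have "{w\<in>D. ((v, w) \<in> E) \<noteq> True} = D - nbhd V2 E v"
      using divb_subset[of V2 E "fst p" "snd p"] by (auto simp: D_def nbhd_def)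
    then have "card {w\<in>D. ((v, w) \<in> E) \<noteq> True} < \<delta> * (\<delta>/4 * card V2)"
      using that by (simp add: bad_set_def D_def power2_eq_square)
    also have "\<dots> \<le> \<delta> * card D"
      using D_large \<delta>_pos by (intro mult_left_mono) auto
    finally show ?thesis by simp
  qed
  then show ?thesis
    using card_uniform_less[of "bad_set p" D True] divb_subset D_large
    by (force simp: bad_set_def D_def)
qed

lemma good_pair_if_far_apart:
  assumes "x \<in> V1" "y \<in> V1" "x \<noteq> y"
    and "\<bar>real (deg V2 E x) - real (deg V2 E y)\<bar> \<le> sqrt (card V2)"
    and "\<delta>/2 * card V2 \<le> card (divset V2 E x y)"
  shows "good_pair (x, y) \<or> good_pair (y, x)"
  using assms divset_commute[of V2 E x y] by (auto simp: good_pair_def divb_eq_iff_card_le)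

definition good_matching :: "(nat \<times> nat) set \<Rightarrow> bool" where
  "good_matching F \<longleftrightarrow> (\<forall>p\<in>F. good_pair p) \<and>
     (\<forall>p\<in>F. \<forall>p'\<in>F. p \<noteq> p' \<longrightarrow> {fst p, snd p} \<inter> {fst p', snd p'} = {})"

lemma good_matching_subset: "good_matching F \<Longrightarrow> F \<subseteq> V1 \<times> V1"
  by (force simp: good_matching_def good_pair_def)

lemma good_matching_insert:
  assumes "good_matching F" "good_pair p"
    and disjoint: "\<And>p'. p' \<in> F \<Longrightarrow> {fst p, snd p} \<inter> {fst p', snd p'} = {}"
  shows "good_matching (insert p F)"
  unfolding good_matching_def
proof (intro conjI ballI impI)
  show "good_pair q" if "q \<in> insert p F" for q
    using that assms(1,2) by (auto simp: good_matching_def)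
  fix q q' assume "q \<in> insert p F" "q' \<in> insert p F" "q \<noteq> q'"
  then consider "q = p" "q' \<in> F" | "q' = p" "q \<in> F" | "q \<in> F" "q' \<in> F"
    by auto
  then show "{fst q, snd q} \<inter> {fst q', snd q'} = {}"
  proof cases
    case 1
    then show ?thesis using disjoint by simp
  next
    case 2
    then show ?thesis using disjoint[of q] by blast
  next
    case 3
    then show ?thesis using assms(1) \<open>q \<noteq> q'\<close> by (simp add: good_matching_def)
  qed
qed

lemma good_matching_mono: "good_matching F \<Longrightarrow> I \<subseteq> F \<Longrightarrow> good_matching I"
  unfolding good_matching_def by blast

lemma exists_maximum_good_matching:
  obtains F where "good_matching F" "finite F" "\<And>F'. good_matching F' \<Longrightarrow> card F' \<le> card F"
proof -
  have "\<exists>F. good_matching F \<and> (\<forall>F'. good_matching F' \<longrightarrow> card F' \<le> card F)"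
  proof (rule ex_has_greatest_nat[of good_matching "{}" card "Suc (card (V1 \<times> V1))"])
    show "good_matching {}" by (simp add: good_matching_def)
    show "\<forall>F. good_matching F \<longrightarrow> card F < Suc (card (V1 \<times> V1))"
      using good_matching_subset finite_V1 by (meson card_mono finite_SigmaI le_imp_less_Suc)
  qed
  then show ?thesis
    using that good_matching_subset finite_V1 by (meson finite_SigmaI finite_subset)
qed

lemma uncovered_vertices_close:
  assumes "good_matching F" "finite F" and maximum: "\<And>F'. good_matching F' \<Longrightarrow> card F' \<le> card F"
    and x: "x \<in> V1 - (fst ` F \<union> snd ` F)" and y: "y \<in> V1 - (fst ` F \<union> snd ` F)" and "x \<noteq> y"
    and "\<bar>real (deg V2 E x) - real (deg V2 E y)\<bar> \<le> sqrt (card V2)"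
  shows "card (divset V2 E x y) < \<delta>/2 * card V2"
proof (rule ccontr)
  assume "\<not> ?thesis"
  then have "good_pair (x, y) \<or> good_pair (y, x)"
    using good_pair_if_far_apart[of x y] assms(4-7) by simp
  then obtain p where p: "good_pair p" "{fst p, snd p} = {x, y}"
    by (metis fst_conv insert_commute snd_conv)
  have "fst p \<in> {x, y}" using p(2) by blast
  then have "p \<notin> F" using x y by auto
  have "{fst p, snd p} \<inter> {fst p', snd p'} = {}" if "p' \<in> F" for p'
    using that x y by (auto simp: p(2))
  then have "good_matching (insert p F)"
    using assms(1) p(1) by (rule good_matching_insert[rotated 2])
  then show False using \<open>p \<notin> F\<close> maximum[of "insert p F"] assms(2) by simp
qed

lemma card_le_if_degree_close_imp_close:
  assumes "R \<subseteq> V1" "4 \<le> card V2"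
    and close: "\<And>x y. x \<in> R \<Longrightarrow> y \<in> R \<Longrightarrow> x \<noteq> y \<Longrightarrow>
      \<bar>real (deg V2 E x) - real (deg V2 E y)\<bar> \<le> sqrt (card V2) \<Longrightarrow>
      card (divset V2 E x y) < \<delta>/2 * card V2"
  shows "card R \<le> (2 * sqrt (card V2) + 1) * uniform_bound"
proof -
  define s where "s = nat \<lfloor>sqrt (card V2)\<rfloor>"
  have "2 \<le> sqrt (card V2)" using assms(2) real_sqrt_le_mono[of 4] by simp
  then have s: "0 < s" "s \<le> sqrt (card V2)" "sqrt (card V2) \<le> 2 * s"
    unfolding s_def by linarith+
  have "card R \<le> (real (card V2 div s) + 1) * uniform_bound"
  proof (rule card_le_by_buckets[where f = "deg V2 E"])
    show "finite R" using finite_subset[OF assms(1) finite_V1] .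
    show "deg V2 E v \<le> card V2" for v
      using finite_V2 nbhd_subset by (simp add: deg_def card_mono)
    fix S assume S: "S \<subseteq> R"
      and degree_close: "\<And>u v. u \<in> S \<Longrightarrow> v \<in> S \<Longrightarrow> deg V2 E u < deg V2 E v + s"
    show "card S \<le> uniform_bound"
    proof (rule card_cluster_le)
      show "S \<subseteq> V1" using S assms(1) by blast
      fix x y assume "x \<in> S" "y \<in> S" "x \<noteq> y"
      moreover have "\<bar>real (deg V2 E x) - real (deg V2 E y)\<bar> \<le> sqrt (card V2)"
        using degree_close[OF \<open>x \<in> S\<close> \<open>y \<in> S\<close>] degree_close[OF \<open>y \<in> S\<close> \<open>x \<in> S\<close>] s(2)
        by linarith
      ultimately show "card (divset V2 E x y) < \<delta>/2 * card V2"
        using close S by blast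
    qed
  qed (use s in simp)
  moreover have "real (card V2 div s) \<le> 2 * sqrt (card V2)"
  proof -
    have "real (card V2) = sqrt (card V2) * sqrt (card V2)" by simp
    also have "\<dots> \<le> sqrt (card V2) * (2 * s)" using s(3) by (intro mult_left_mono) auto
    finally have "real (card V2) \<le> 2 * sqrt (card V2) * s" by (simp add: mult_ac)
    then have "real (card V2) / s \<le> 2 * sqrt (card V2)"
      using s(1) by (simp add: divide_le_eq)
    moreover have "real (card V2 div s) \<le> real (card V2) / s"
      by (rule of_nat_div_le_of_nat)
    ultimately show ?thesis by linarith
  qed
  ultimately show ?thesis
    using uniform_bound_nonneg by (meson add_right_mono mult_right_mono order_trans)
qed

lemma pair_matching_of_independent:
  assumes "good_matching I" "finite I"
    and independent: "\<And>p p'. p \<in> I \<Longrightarrow> p' \<in> I \<Longrightarrow> p \<noteq> p' \<Longrightarrow>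
      fst p' \<notin> bad_set p \<and> snd p' \<notin> bad_set p"
  shows "\<exists>h. pair_matching (\<delta>^2/4) V1 V2 E h (card I)"
proof -
  obtain h where h: "bij_betw h {0..<card I} I"
    using ex_bij_betw_nat_finite[OF assms(2)] by blast
  then have hI: "h i \<in> I" and good: "good_pair (h i)" if "i < card I" for i
    using that assms(1) by (auto simp: bij_betw_def good_matching_def)
  have "pair_matching (\<delta>^2/4) V1 V2 E h (card I)"
    unfolding pair_matching_def
  proof (intro conjI allI impI)
    fix i assume "i < card I"
    then show "fst (h i) \<in> V1" "snd (h i) \<in> V1" "fst (h i) \<noteq> snd (h i)"
      "divb V2 E (fst (h i)) (snd (h i)) = nbhd V2 E (fst (h i)) - nbhd V2 E (snd (h i))"
      "real (deg V2 E (fst (h i))) - real (deg V2 E (snd (h i))) \<le> real (card V2) powr 0.5"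
      using good by (auto simp: good_pair_def powr_half_sqrt)
  next
    fix i j assume ij: "i < card I" "j < card I" "i \<noteq> j"
    then have "h i \<noteq> h j" using h by (auto simp: bij_betw_def inj_on_def)
    then show "{fst (h i), snd (h i)} \<inter> {fst (h j), snd (h j)} = {}"
      using assms(1) hI ij by (auto simp: good_matching_def)
    have "fst (h j) \<in> V1" "snd (h j) \<in> V1" "fst (h j) \<notin> bad_set (h i)" "snd (h j) \<notin> bad_set (h i)"
      using independent[OF hI hI] good ij \<open>h i \<noteq> h j\<close> by (auto simp: good_pair_def)
    then show "\<delta>^2/4 * card V2 \<le> card (divb V2 E (fst (h i)) (snd (h i)) - nbhd V2 E (fst (h j)))"
      "\<delta>^2/4 * card V2 \<le> card (divb V2 E (fst (h i)) (snd (h i)) - nbhd V2 E (snd (h j)))"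
      by (auto simp: bad_set_def)
  qed
  then show ?thesis by blast
qed

lemma pair_matching_of_large_good_matching:
  assumes F: "good_matching F" "finite F" and "(4 * uniform_bound + 1) * k \<le> card F"
  shows "\<exists>h k'. k \<le> k' \<and> pair_matching (\<delta>^2/4) V1 V2 E h k'"
proof -
  define R where "R p p' \<longleftrightarrow> fst p' \<in> bad_set p \<or> snd p' \<in> bad_set p" for p p'
  have "inj_on fst F" "inj_on snd F"
    using F(1) unfolding good_matching_def inj_on_def by blast+
  have out_degree: "card {p'\<in>F. R p p'} \<le> 2 * uniform_bound" if "p \<in> F" for p
  proof -
    have "finite (bad_set p)" using finite_V1 by (simp add: bad_set_def)
    have "card {p'\<in>F. R p p'} \<le> card {p'\<in>F. fst p' \<in> bad_set p} + card {p'\<in>F. snd p' \<in> bad_set p}"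
      unfolding R_def Collect_disj_eq conj_disj_distribL by (rule card_Un_le)
    moreover have "card {p'\<in>F. fst p' \<in> bad_set p} \<le> card (bad_set p)"
      by (rule card_inj_on_le[OF inj_on_subset[OF \<open>inj_on fst F\<close>]])
        (use \<open>finite (bad_set p)\<close> in auto)
    moreover have "card {p'\<in>F. snd p' \<in> bad_set p} \<le> card (bad_set p)"
      by (rule card_inj_on_le[OF inj_on_subset[OF \<open>inj_on snd F\<close>]])
        (use \<open>finite (bad_set p)\<close> in auto)
    moreover have "card (bad_set p) \<le> uniform_bound"
      using F(1) that card_bad_set_le by (simp add: good_matching_def)
    ultimately show ?thesis by linarith
  qed
  obtain I where I: "I \<subseteq> F" "card F \<le> card I * (2 * (2 * uniform_bound) + 1)"
    and independent: "\<forall>p\<in>I. \<forall>p'\<in>I. p \<noteq> p' \<longrightarrow> \<not> R p p'"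
    using large_independent_subset[of F R "2 * uniform_bound", OF F(2) out_degree] by blast
  have "\<exists>h. pair_matching (\<delta>^2/4) V1 V2 E h (card I)"
  proof (rule pair_matching_of_independent)
    show "good_matching I" using good_matching_mono[OF F(1) I(1)] .
    show "finite I" using finite_subset[OF I(1) F(2)] .
    show "fst p' \<notin> bad_set p \<and> snd p' \<notin> bad_set p" if "p \<in> I" "p' \<in> I" "p \<noteq> p'" for p p'
      using independent that by (simp add: R_def)
  qed
  then obtain h where "pair_matching (\<delta>^2/4) V1 V2 E h (card I)" ..
  moreover have "k \<le> card I"
  proof (rule mult_right_le_imp_le)
    show "k * (4 * uniform_bound + 1) \<le> card I * (4 * uniform_bound + 1)"
      using assms(3) I(2) by (simp add: mult.commute)
    show "0 < 4 * uniform_bound + 1" using uniform_bound_nonneg by simp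
  qed
  ultimately show ?thesis by blast
qed

lemma pair_matching_exists:
  assumes "4 \<le> card V2" "card V2 \<le> 2 * card V1" "12 * uniform_bound + 2 \<le> sqrt (card V1)"
  shows "\<exists>h k. sqrt (card V1) \<le> k \<and> pair_matching (\<delta>^2/4) V1 V2 E h k"
proof -
  obtain F where F: "good_matching F" "finite F"
    and maximum: "\<And>F'. good_matching F' \<Longrightarrow> card F' \<le> card F"
    using exists_maximum_good_matching by blast
  show ?thesis
  proof (cases "(4 * uniform_bound + 1) * sqrt (card V1) \<le> card F")
    case True
    then show ?thesis by (rule pair_matching_of_large_good_matching[OF F])
  next
    case False
    define R where "R = V1 - (fst ` F \<union> snd ` F)"
    have "card R \<le> (2 * sqrt (card V2) + 1) * uniform_bound"
      using uncovered_vertices_close[OF F maximum] assms(1)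
      by (intro card_le_if_degree_close_imp_close) (auto simp: R_def)
    also have "\<dots> \<le> 4 * sqrt (card V1) * uniform_bound"
    proof -
      have "sqrt (card V2) \<le> sqrt 2 * sqrt (card V1)"
        using assms(2) by (simp flip: real_sqrt_mult)
      also have "\<dots> \<le> 3/2 * sqrt (card V1)"
        by (intro mult_right_mono real_le_lsqrt) (auto simp: power2_eq_square)
      finally have "2 * sqrt (card V2) + 1 \<le> 4 * sqrt (card V1)"
        using assms(3) uniform_bound_nonneg by linarith
      then show ?thesis using uniform_bound_nonneg by (intro mult_right_mono) auto
    qed
    finally have R_small: "card R \<le> 4 * sqrt (card V1) * uniform_bound" .
    have "V1 \<subseteq> R \<union> fst ` F \<union> snd ` F" by (auto simp: R_def)
    then have "card V1 \<le> card (R \<union> fst ` F \<union> snd ` F)"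
      using finite_V1 F(2) by (intro card_mono) (auto simp: R_def)
    also have "\<dots> \<le> card (R \<union> fst ` F) + card (snd ` F)"
      by (rule card_Un_le)
    also have "\<dots> \<le> card R + card (fst ` F) + card (snd ` F)"
      using card_Un_le[of R "fst ` F"] by simp
    also have "\<dots> \<le> card R + card F + card F"
      using card_image_le[OF F(2), of fst] card_image_le[OF F(2), of snd] by simp
    finally have "card V1 \<le> card R + 2 * card F" by simp
    then have "card V1 < sqrt (card V1) * (12 * uniform_bound + 2)"
      using R_small False by (simp add: algebra_simps)
    also have "\<dots> \<le> sqrt (card V1) * sqrt (card V1)"
      using assms(3) by (intro mult_left_mono) auto
    finally show ?thesis by simp
  qed
qed

end

lemma ramsey_threshold_ratio_le:
  fixes C :: real and m n :: nat
  defines "q \<equiv> 2 powr (-1/(8*C))"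
  assumes "0 < C" "1 \<le> m" "m \<le> 2 * n"
  shows "ramsey_threshold C n / q ^ ramsey_threshold C m \<le> (C * log 2 n + 1) * (2*n) powr (1/8) / q"
proof -
  have q: "0 < q" "q \<le> 1" using assms(2) by (auto simp: q_def powr_less_one less_imp_le)
  have "1 \<le> n" using assms(3,4) by linarith
  have "q powr (C * log 2 m) = 2 powr (-1/(8*C) * (C * log 2 m))"
    by (simp add: q_def powr_powr)
  also have "-1/(8*C) * (C * log 2 m) = log 2 m * (-1/8)"
    using assms(2) by (simp add: field_simps)
  also have "2 powr (log 2 m * (-1/8)) = (2 powr log 2 m) powr (-1/8)"
    by (simp add: powr_powr)
  also have "\<dots> = m powr (-1/8)"
    using assms(3) by simp
  finally have "q powr (C * log 2 m) = m powr (-1/8)" .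
  then have "q * m powr (-1/8) = q powr (C * log 2 m + 1)"
    using q by (simp add: powr_add)
  also have "\<dots> \<le> q powr ramsey_threshold C m"
    using q ramsey_threshold_le[of C m] assms(2,3) by (intro powr_mono') auto
  also have "\<dots> = q ^ ramsey_threshold C m"
    using q by (simp add: powr_realpow)
  finally have "q * m powr (-1/8) \<le> q ^ ramsey_threshold C m" .
  then have "ramsey_threshold C n / q ^ ramsey_threshold C m \<le> (C * log 2 n + 1) / (q * m powr (-1/8))"
    using ramsey_threshold_le[of C n] assms(2,3) q \<open>1 \<le> n\<close>
    by (intro frac_le) auto
  also have "\<dots> = (C * log 2 n + 1) * m powr (1/8) / q"
    using q assms(3) by (simp add: powr_minus_divide field_simps)
  also have "\<dots> \<le> (C * log 2 n + 1) * (2*n) powr (1/8) / q"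
    using q assms \<open>1 \<le> n\<close> by (intro divide_right_mono mult_left_mono powr_mono2) auto
  finally show ?thesis .
qed

lemma eventually_ramsey_size_conditions:
  fixes C \<delta> q :: real
  assumes "0 < C" "0 < \<delta>" "0 < q"
  shows "\<forall>\<^sub>F x in at_top. 4 \<le> x \<and> 2 * (C * log 2 x + 1) \<le> \<delta>/4 * x \<and>
           12 * ((C * log 2 x + 1) * (2*x) powr (1/8) / q) + 2 \<le> sqrt x"
  using assms by (intro eventually_conj; real_asymp)

lemma pair_matching_exists_if_large:
  fixes C \<delta> :: real
  assumes C: "0 < C" and \<delta>: "0 < \<delta>" "\<delta> < 1/2" "1 - 2*\<delta> = 2 powr (-1/(8*C))"
    and graph: "bipartite_graph V1 V2 E" and ramsey: "bip_ramsey C V1 V2 E"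
    and sizes: "card V2 \<le> 2 * card V1" "4 \<le> card V2"
      "2 * (C * log 2 (card V2) + 1) \<le> \<delta>/4 * card V2"
      "12 * ((C * log 2 (card V1) + 1) * (2 * card V1) powr (1/8) / (1 - 2*\<delta>)) + 2 \<le> sqrt (card V1)"
  shows "\<exists>p k. sqrt (card V1) \<le> k \<and> pair_matching (\<delta>^2/4) V1 V2 E p k"
proof -
  interpret ramsey_graph C \<delta> V1 V2 E
    using graph ramsey \<delta> sizes(2,3) ramsey_threshold_le[of C "card V2"] C
    by unfold_locales auto
  have "12 * uniform_bound + 2 \<le> sqrt (card V1)"
    using ramsey_threshold_ratio_le[of C "card V2" "card V1"] sizes C
    unfolding uniform_bound_def \<delta>(3) by force
  then show ?thesis using pair_matching_exists sizes(1,2) by blast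
qed

theorem lemma3p1:
  fixes C :: real
  assumes "C > 1"
  shows "\<exists>eps > 0. \<exists>nC :: nat. \<forall>V1 V2 :: nat set. \<forall>E.
           bipartite_graph V1 V2 E \<longrightarrow> bip_ramsey C V1 V2 E \<longrightarrow>
           real (card V1) \<ge> real (card V2) / 2 \<longrightarrow> real (card V2) / 2 \<ge> real nC \<longrightarrow>
           (\<exists>x0 X k. real k \<ge> real (card V1) powr 0.5 \<and> pair_star eps V1 V2 E x0 X k) \<or>
           (\<exists>p k. real k \<ge> real (card V1) powr 0.5 \<and> pair_matching eps V1 V2 E p k)"
proof -
  \<comment> \<open>q^(C log m) = m^(-1/8), so the greedy loss (1 - 2\<delta>)^t2 = q^t2 costs only
    a factor m^(1/8).\<close>
  define q where "q = 2 powr (-1/(8*C))"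
  define \<delta> where "\<delta> = (1 - q)/2"
  have "0 < q" "q < 1" using assms by (auto simp: q_def powr_less_one)
  then have \<delta>: "0 < \<delta>" "\<delta> < 1/2" "1 - 2*\<delta> = q" by (simp_all add: \<delta>_def field_simps)
  obtain N where N: "\<And>x. N \<le> x \<Longrightarrow> 4 \<le> x \<and> 2 * (C * log 2 x + 1) \<le> \<delta>/4 * x \<and>
      12 * ((C * log 2 x + 1) * (2*x) powr (1/8) / q) + 2 \<le> sqrt x"
    using eventually_ramsey_size_conditions[of C \<delta> q] assms \<delta> \<open>0 < q\<close>
    unfolding eventually_at_top_linorder by auto
  show ?thesis
  proof (intro exI[of _ "\<delta>^2/4"] conjI exI[of _ "nat \<lceil>N\<rceil>"] allI impI disjI2)
    show "0 < \<delta>^2/4" using \<delta> by simp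
    fix V1 V2 E
    assume "bipartite_graph V1 V2 E" "bip_ramsey C V1 V2 E"
      and "card V2 / 2 \<le> real (card V1)" "real (nat \<lceil>N\<rceil>) \<le> card V2 / 2"
    moreover from this(3,4) have "card V2 \<le> 2 * card V1" "N \<le> card V2" "N \<le> card V1"
      by linarith+
    ultimately have "\<exists>p k. sqrt (card V1) \<le> k \<and> pair_matching (\<delta>^2/4) V1 V2 E p k"
      using N[of "card V2"] N[of "card V1"] assms \<delta>
      by (intro pair_matching_exists_if_large) (auto simp: q_def)
    then show "\<exists>p k. card V1 powr 0.5 \<le> real k \<and> pair_matching (\<delta>^2/4) V1 V2 E p k"
      by (simp add: powr_half_sqrt)
  qed
qed

end
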